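(* Let the matrices $E^{(0,0,0)},E^{(1,0,0)},E^{(0,1,0)},E^{(0,0,1)},D^{(1,0,0)},D^{(0,1,0)},D^{(0,0,1)},D^{(0)}$ be as in the context. Then for every $\mathbf f\in\mathbb R^{n_0}$: (a) $D^{(1,0,0)}(E^{(0,0,0)})^T\mathbf f=(E^{(1,0,0)})^TD^{(0)}\mathbf f$; (b) $D^{(0,1,0)}(E^{(0,0,0)})^T\mathbf f=(E^{(0,1,0)})^TD^{(0)}\mathbf f$; (c) $D^{(0,0,1)}(E^{(0,0,0)})^T\mathbf f=(E^{(0,0,1)})^TD^{(0)}\mathbf f$.
   Context: Fix integers $n^r,n^s,n^t$ (large enough for all index ranges to make sense). Put $\bar n_0=n^r(n^s-2)+3$, $\bar n_1=2n^r(n^s-2)+2$, $n_0=n^t\bar n_0$, $n_1=n^t(\bar n_0+\bar n_1)$. Let $\theta_i=2\pi+\frac{(1-2i)\pi}{n^r}$. Let $\bar E$ be the $3\times 2n^r$ matrix with columns indexed by $(1,1),\dots,(n^r,1),(1,2),\dots,(n^r,2)$ and entries $\bar E_{\ell,(i,1)}=\tfrac13$, $\bar E_{1,(i,2)}=\tfrac13+\tfrac13\cos\theta_i$, $\bar E_{2,(i,2)}=\tfrac13-\tfrac16\cos\theta_i+\tfrac{\sqrt3}{6}\sin\theta_i$, $\bar E_{3,(i,2)}=\tfrac13-\tfrac16\cos\theta_i-\tfrac{\sqrt3}{6}\sin\theta_i$; set $\bar E_{\ell,(n^r+1,2)}:=\bar E_{\ell,(1,2)}$. Let $E^{(0)}=\begin{bmatrix}\bar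 E&0\\0&I_{n^r(n^s-2)}\end{bmatrix}$ (size $\bar n_0\times n^rn^s$, columns indexed by $i+(j-1)n^r$). Let $E^{(1,0)}$ ($\bar n_1\times n^rn^s$) be given by $y=E^{(1,0)}x$: $y_\ell=\sum_{i=1}^{n^r}(\bar E_{\ell+1,(i+1,2)}-\bar E_{\ell+1,(i,2)})x_{i+n^r}$ ($\ell=1,2$), and for $j=3,\dots,n^s$, $i=1,\dots,n^r$: $y_{2+i+(2j-6)n^r}=0$, $y_{2+i+(2j-5)n^r}=x_{i+(j-1)n^r}$. Let $E^{(0,1)}$ ($\bar n_1\times n^r(n^s-1)$) be given by $y=E^{(0,1)}x$: $y_\ell=\sum_{i=1}^{n^r}(\bar E_{\ell+1,(i,2)}-\bar E_{\ell+1,(i,1)})x_i$ ($\ell=1,2$), and for $j=2,\dots,n^s-1$, $i=1,\dots,n^r$: $y_{2+i+(2j-4)n^r}=x_{i+(j-1)n^r}$, $y_{2+i+(2j-3)n^r}=0$. With $[A;B]$ denoting vertical stacking and $0_{a\times b}$ zero matrices, set $E^{(0,0,0)}=I_{n^t}\otimes E^{(0)}$, $E^{(1,0,0)}=I_{n^t}\otimes[E^{(1,0)};0_{\bar n_0\times n^rn^s}]$, $E^{(0,1,0)}=I_{n^t}\otimes[E^{(0,1)};0_{\bar n_0\times n^r(n^s-1)}]$, $E^{(0,0,1)}=I_{n^t}\otimes[0_{\bar n_1\times n^rn^s};E^{(0)}]$. Difference matrices: $\mathfrak D_q$ is the $(q-1)\times q$ matrix with row $j$ having $-1$ in column $j$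 and $1$ in column $j+1$; $\mathfrak D_{q,\mathrm{per}}$ is the $q\times q$ matrix with row $j$ having $-1$ in column $j$ and $1$ in column $j+1$ for $j<q$, and last row having $1$ in column $1$ and $-1$ in column $q$. Set $D^{(1,0,0)}=I_{n^t}\otimes I_{n^s}\otimes\mathfrak D_{n^r,\mathrm{per}}$, $D^{(0,1,0)}=I_{n^t}\otimes\mathfrak D_{n^s}\otimes I_{n^r}$, $D^{(0,0,1)}=\mathfrak D_{n^t,\mathrm{per}}\otimes I_{n^s}\otimes I_{n^r}$. $D^{(0)}$ is the $n_1\times n_0$ matrix with $\mathbf g=D^{(0)}\mathbf f$ given, for each $k=1,\dots,n^t$, with $a=(k-1)\bar n_0$ and $b=(k-1)(\bar n_0+\bar n_1)$, by: $g_{1+b}=f_{2+a}-f_{1+a}$; $g_{2+b}=f_{3+a}-f_{1+a}$; for $i=1,\dots,n^r$: $g_{2+i+b}=f_{3+i+a}-\sum_{\ell=1}^3\bar E_{\ell,(i,2)}f_{\ell+a}$; for $j=3,\dots,n^s-1$, $i=1,\dots,n^r$: $g_{2+i+(2j-5)n^r+b}=f_{3+\sigma(i)+(j-3)n^r+a}-f_{3+i+(j-3)n^r+a}$ and $g_{2+i+(2j-4)n^r+b}=f_{3+i+(j-2)n^r+a}-f_{3+i+(j-3)n^r+a}$; for $i=1,\dots,n^r$: $g_{2+i+(2n^s-5)n^r+b}=f_{3+\sigma(i)+(n^s-3)n^r+a}-f_{3+i+(n^s-3)n^r+a}$; for $i=1,\dots,\bar n_0$: $g_{i+k\bar n_1+(k-1)\bar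 n_0}=f_{i+k\bar n_0}-f_{i+(k-1)\bar n_0}$, with the convention $f_{n^t\bar n_0+i}:=f_i$. Here $\sigma(i)=i+1$ for $i<n^r$ and $\sigma(n^r)=1$. *)

theory Defs
  imports Complex_Main
begin

text \<open>All vectors and matrices are 1-based.
  A vector of length m is a function v :: nat \<Rightarrow> real, only the entries v 1, ..., v m matter.
  A matrix with m rows and n columns is a function A :: nat \<Rightarrow> nat \<Rightarrow> real,
  A i j being the entry in row i and column j (1 \<le> i \<le> m, 1 \<le> j \<le> n).
  The parameters nr, ns, nt stand for n^r, n^s, n^t.\<close>

definition mat_vec :: "nat \<Rightarrow> (nat \<Rightarrow> nat \<Rightarrow> real) \<Rightarrow> (nat \<Rightarrow> real) \<Rightarrow> nat \<Rightarrow> real" where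
  "mat_vec n A x = (\<lambda>i. \<Sum>j=1..n. A i j * x j)"

definition tmat_vec :: "nat \<Rightarrow> (nat \<Rightarrow> nat \<Rightarrow> real) \<Rightarrow> (nat \<Rightarrow> real) \<Rightarrow> nat \<Rightarrow> real" where
  "tmat_vec m A y = (\<lambda>j. \<Sum>i=1..m. A i j * y i)"

text \<open>Kronecker product A \<otimes> B where B has r rows and s columns.\<close>
definition kron :: "nat \<Rightarrow> nat \<Rightarrow> (nat \<Rightarrow> nat \<Rightarrow> real) \<Rightarrow> (nat \<Rightarrow> nat \<Rightarrow> real) \<Rightarrow> nat \<Rightarrow> nat \<Rightarrow> real" where
  "kron r s A B = (\<lambda>I J. A ((I - 1) div r + 1) ((J - 1) div s + 1) * B ((I - 1) mod r + 1) ((J - 1) mod s + 1))"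

definition vstack :: "nat \<Rightarrow> (nat \<Rightarrow> nat \<Rightarrow> real) \<Rightarrow> (nat \<Rightarrow> nat \<Rightarrow> real) \<Rightarrow> nat \<Rightarrow> nat \<Rightarrow> real" where
  "vstack m A B = (\<lambda>i j. if i \<le> m then A i j else B (i - m) j)"

definition idm :: "nat \<Rightarrow> nat \<Rightarrow> real" where
  "idm = (\<lambda>i j. if i = j then 1 else 0)"

definition zerom :: "nat \<Rightarrow> nat \<Rightarrow> real" where
  "zerom = (\<lambda>i j. 0)"

text \<open>Difference matrices \<open>\<DD>_q\<close> (size (q-1) x q) and \<open>\<DD>_{q,per}\<close> (size q x q).\<close>
definition diffm :: "nat \<Rightarrow> nat \<Rightarrow> real" where
  "diffm = (\<lambda>i j. (if j = i then -1 else 0) + (if j = i + 1 then 1 else 0))"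

definition diffm_per :: "nat \<Rightarrow> nat \<Rightarrow> nat \<Rightarrow> real" where
  "diffm_per q = (\<lambda>i j. if i < q then (if j = i then -1 else 0) + (if j = i + 1 then 1 else 0)
                        else (if j = 1 then 1 else 0) + (if j = q then -1 else 0))"

definition bn0 :: "nat \<Rightarrow> nat \<Rightarrow> nat" where "bn0 nr ns = nr * (ns - 2) + 3"
definition bn1 :: "nat \<Rightarrow> nat \<Rightarrow> nat" where "bn1 nr ns = 2 * nr * (ns - 2) + 2"
definition n0 :: "nat \<Rightarrow> nat \<Rightarrow> nat \<Rightarrow> nat" where "n0 nr ns nt = nt * bn0 nr ns"
definition n1 :: "nat \<Rightarrow> nat \<Rightarrow> nat \<Rightarrow> nat" where "n1 nr ns nt = nt * (bn0 nr ns + bn1 nr ns)"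

definition theta :: "nat \<Rightarrow> nat \<Rightarrow> real" where
  "theta nr i = 2 * pi + (1 - 2 * real i) * pi / real nr"

definition Ebar2 :: "nat \<Rightarrow> nat \<Rightarrow> nat \<Rightarrow> real" where
  "Ebar2 nr l i0 = (let i = (if i0 = nr + 1 then 1 else i0) in
     if l = 1 then 1/3 + 1/3 * cos (theta nr i)
     else if l = 2 then 1/3 - 1/6 * cos (theta nr i) + sqrt 3 / 6 * sin (theta nr i)
     else 1/3 - 1/6 * cos (theta nr i) - sqrt 3 / 6 * sin (theta nr i))"

definition Ebar1 :: "nat \<Rightarrow> nat \<Rightarrow> real" where
  "Ebar1 l i = 1/3"

text \<open>The 3 x 2nr matrix \<open>\<bar>E\<close>; column c = i for (i,1) and c = nr + i for (i,2).\<close>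
definition Ebar :: "nat \<Rightarrow> nat \<Rightarrow> nat \<Rightarrow> real" where
  "Ebar nr = (\<lambda>l c. if c \<le> nr then Ebar1 l c else Ebar2 nr l (c - nr))"

text \<open>E^(0) = diag(\<open>\<bar>E\<close>, I_{nr(ns-2)}), size bn0 x nr*ns.\<close>
definition E0 :: "nat \<Rightarrow> nat \<Rightarrow> nat \<Rightarrow> real" where
  "E0 nr = (\<lambda>a c. if a \<le> 3 \<and> c \<le> 2 * nr then Ebar nr a c
                 else if 3 < a \<and> 2 * nr < c then (if a - 3 = c - 2 * nr then 1 else 0)
                 else 0)"

definition E10 :: "nat \<Rightarrow> nat \<Rightarrow> nat \<Rightarrow> nat \<Rightarrow> real" where
  "E10 nr ns = (\<lambda>r c.
     (if (r = 1 \<or> r = 2) \<and> nr < c \<and> c \<le> 2 * nr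
      then Ebar2 nr (r + 1) (c - nr + 1) - Ebar2 nr (r + 1) (c - nr) else 0)
     + (\<Sum>j=3..ns. \<Sum>i=1..nr.
          if r = 2 + i + (2 * j - 5) * nr \<and> c = i + (j - 1) * nr then 1 else 0))"

definition E01 :: "nat \<Rightarrow> nat \<Rightarrow> nat \<Rightarrow> nat \<Rightarrow> real" where
  "E01 nr ns = (\<lambda>r c.
     (if (r = 1 \<or> r = 2) \<and> 1 \<le> c \<and> c \<le> nr
      then Ebar2 nr (r + 1) c - Ebar1 (r + 1) c else 0)
     + (\<Sum>j=2..ns-1. \<Sum>i=1..nr.
          if r = 2 + i + (2 * j - 4) * nr \<and> c = i + (j - 1) * nr then 1 else 0))"

definition E000 :: "nat \<Rightarrow> nat \<Rightarrow> nat \<Rightarrow> nat \<Rightarrow> real" where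
  "E000 nr ns = kron (bn0 nr ns) (nr * ns) idm (E0 nr)"

definition E100 :: "nat \<Rightarrow> nat \<Rightarrow> nat \<Rightarrow> nat \<Rightarrow> real" where
  "E100 nr ns = kron (bn1 nr ns + bn0 nr ns) (nr * ns) idm (vstack (bn1 nr ns) (E10 nr ns) zerom)"

definition E010 :: "nat \<Rightarrow> nat \<Rightarrow> nat \<Rightarrow> nat \<Rightarrow> real" where
  "E010 nr ns = kron (bn1 nr ns + bn0 nr ns) (nr * (ns - 1)) idm (vstack (bn1 nr ns) (E01 nr ns) zerom)"

definition E001 :: "nat \<Rightarrow> nat \<Rightarrow> nat \<Rightarrow> nat \<Rightarrow> real" where
  "E001 nr ns = kron (bn1 nr ns + bn0 nr ns) (nr * ns) idm (vstack (bn1 nr ns) zerom (E0 nr))"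

definition D100 :: "nat \<Rightarrow> nat \<Rightarrow> nat \<Rightarrow> nat \<Rightarrow> real" where
  "D100 nr ns = kron (ns * nr) (ns * nr) idm (kron nr nr idm (diffm_per nr))"

definition D010 :: "nat \<Rightarrow> nat \<Rightarrow> nat \<Rightarrow> nat \<Rightarrow> real" where
  "D010 nr ns = kron ((ns - 1) * nr) (ns * nr) idm (kron nr nr diffm idm)"

definition D001 :: "nat \<Rightarrow> nat \<Rightarrow> nat \<Rightarrow> nat \<Rightarrow> nat \<Rightarrow> real" where
  "D001 nr ns nt = kron (ns * nr) (ns * nr) (diffm_per nt) (kron nr nr idm idm)"

definition sigma :: "nat \<Rightarrow> nat \<Rightarrow> nat" where
  "sigma nr i = (if i < nr then i + 1 else 1)"

text \<open>The vector g = D^(0) f, of length n1, written as a sum over the defining equations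
  (each row index occurs in exactly one equation; the convention f_{nt*bn0+i} := f_i is
  implemented by \<open>fw\<close>).\<close>
definition D0 :: "nat \<Rightarrow> nat \<Rightarrow> nat \<Rightarrow> (nat \<Rightarrow> real) \<Rightarrow> nat \<Rightarrow> real" where
  "D0 nr ns nt f = (\<lambda>r.
     let b0 = bn0 nr ns; b1 = bn1 nr ns;
         fw = (\<lambda>x. if x \<le> nt * b0 then f x else f (x - nt * b0))
     in \<Sum>k=1..nt. let a = (k - 1) * b0; b = (k - 1) * (b0 + b1) in
        (if r = 1 + b then fw (2 + a) - fw (1 + a) else 0)
      + (if r = 2 + b then fw (3 + a) - fw (1 + a) else 0)
      + (\<Sum>i=1..nr. if r = 2 + i + b
           then fw (3 + i + a) - (\<Sum>l=1..3. Ebar2 nr l i * fw (l + a)) else 0)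
      + (\<Sum>j=3..ns-1. \<Sum>i=1..nr.
           (if r = 2 + i + (2 * j - 5) * nr + b
            then fw (3 + sigma nr i + (j - 3) * nr + a) - fw (3 + i + (j - 3) * nr + a) else 0)
         + (if r = 2 + i + (2 * j - 4) * nr + b
            then fw (3 + i + (j - 2) * nr + a) - fw (3 + i + (j - 3) * nr + a) else 0))
      + (\<Sum>i=1..nr. if r = 2 + i + (2 * ns - 5) * nr + b
           then fw (3 + sigma nr i + (ns - 3) * nr + a) - fw (3 + i + (ns - 3) * nr + a) else 0)
      + (\<Sum>i=1..b0. if r = i + k * b1 + (k - 1) * b0
           then fw (i + k * b0) - fw (i + (k - 1) * b0) else 0))"

end

theory Submission
  imports Defs
begin

text \<open>
  Apart from the time differences in D^(0,0,1) and D^(0), which couple slab k only to slab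
  sigma k, all matrices are block diagonal over the nt time slabs; so every identity is an
  equation at a single node (i, j) of a slab k.
  Column (i, j) of E^(0) takes the mean of the three centre values (j = 1), their barycentric
  interpolation with weights Ebar_{l,(i,2)} (j = 2), or a single ring value (j \<ge> 3), and each
  row of D^(0) is the difference of two such nodal values. Away from the centre both sides are
  therefore the same difference. At the centre D^(0) only records f_2 - f_1 and f_3 - f_1; this
  suffices because the weights of both columns of Ebar sum to 1 (the cosine and sine terms
  cancel), so the difference of two such weighted means only depends on f_2 - f_1 and f_3 - f_1.
\<close>

section \<open>Index arithmetic and finite sums\<close>

lemma mixed_radix_eq_iff:
  fixes i i' q q' n :: nat
  assumes "1 \<le> i" "i \<le> n" "1 \<le> i'" "i' \<le> n"
  shows "i + q*n = i' + q'*n \<longleftrightarrow> i = i' \<and> q = q'"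
proof
  assume eq: "i + q*n = i' + q'*n"
  obtain a a' where a: "i = Suc a" "i' = Suc a'"
    using assms by (cases i; cases i') auto
  then have "a < n" "a' < n" and "a + q*n = a' + q'*n"
    using assms eq by auto
  then have "(a + q*n) mod n = (a' + q'*n) mod n \<and> (a + q*n) div n = (a' + q'*n) div n"
    by simp
  then show "i = i' \<and> q = q'"
    using a \<open>a < n\<close> \<open>a' < n\<close> by simp
qed simp

lemma mixed_radix_le:
  fixes i n q q' :: nat
  assumes "i \<le> n" "q < q'"
  shows "i + q*n \<le> q'*n"
proof -
  have "i + q*n \<le> (q+1)*n" using assms by simp
  also have "\<dots> \<le> q'*n" using assms by (intro mult_le_mono1) simp
  finally show ?thesis .
qed

lemma mixed_radix_le_iff:
  fixes i n q p :: nat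
  assumes "1 \<le> i" "i \<le> n"
  shows "q*n + i \<le> p*n \<longleftrightarrow> q < p"
proof
  assume "q*n + i \<le> p*n"
  then have "q*n < p*n" using assms by linarith
  then show "q < p" by (simp add: mult_less_cancel2)
qed (use assms mixed_radix_le[of i n q p] in simp)

lemma block_index_le:
  fixes i j m n :: nat
  assumes "i \<le> m" "1 \<le> j" "j \<le> n"
  shows "(j-1)*m + i \<le> n*m"
  using assms mixed_radix_le[of i m "j-1" n] by (simp add: add.commute)

lemma obtain_block_index:
  fixes x n m :: nat
  assumes "x \<in> {1..n*m}"
  obtains k c where "1 \<le> k" "k \<le> n" "1 \<le> c" "c \<le> m" "x = (k-1)*m + c"
proof
  have m: "0 < m" using assms by (auto intro: ccontr)
  have "x - 1 < n*m" using assms by auto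
  then show "(x-1) div m + 1 \<le> n" using m by (simp add: less_mult_imp_div_less Suc_le_eq)
  show "(x-1) mod m + 1 \<le> m" using m by (simp add: Suc_le_eq)
  show "x = ((x-1) div m + 1 - 1)*m + ((x-1) mod m + 1)" using assms by simp
qed simp_all

lemma sigma_range: "1 \<le> k \<Longrightarrow> k \<le> n \<Longrightarrow> 1 \<le> sigma n k \<and> sigma n k \<le> n"
  by (simp add: sigma_def)

lemma sum_split_blocks:
  fixes n m :: nat
  shows "(\<Sum>x=1..n*m. h x) = (\<Sum>k=1..n. \<Sum>c=1..m. h ((k-1)*m + c))"
proof (induction n)
  case (Suc n)
  have "(\<Sum>x=1..n*m + m. h x) = (\<Sum>x=1..n*m. h x) + (\<Sum>x=n*m+1..n*m + m. h x)"
    by (rule sum.ub_add_nat) simp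
  also have "(\<Sum>x=n*m+1..n*m + m. h x) = (\<Sum>c=1..m. h (n*m + c))"
    using sum.shift_bounds_cl_nat_ivl[of h 1 "n*m" m] by (simp add: add.commute)
  finally show ?case using Suc by (simp add: add.commute)
qed simp

lemma sum_if_unique:
  assumes "finite A" "a \<in> A" "\<And>x. x \<in> A \<Longrightarrow> P x \<longleftrightarrow> x = a"
  shows "(\<Sum>x\<in>A. if P x then v x else 0) = v a"
proof -
  have "(\<Sum>x\<in>A. if P x then v x else 0) = (\<Sum>x\<in>A. if x = a then v x else 0)"
    using assms(3) by (intro sum.cong) auto
  then show ?thesis
    using assms(1,2) by simp
qed

lemma sum_delta2:
  assumes "finite A" "finite B"
  shows "(\<Sum>x\<in>A. \<Sum>y\<in>B. if x = a \<and> y = b then v else 0) = (if a \<in> A \<and> b \<in> B then v else 0)"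
proof -
  have "(\<Sum>x\<in>A. \<Sum>y\<in>B. if x = a \<and> y = b then v else 0)
      = (\<Sum>x\<in>A. if x = a then (\<Sum>y\<in>B. if y = b then v else 0) else 0)"
    by (intro sum.cong refl) auto
  then show ?thesis
    using assms by simp
qed

lemma sum_atLeastAtMost_1_3: "(\<Sum>l=1..3. h l) = h 1 + h 2 + h (3::nat)"
proof -
  have "{1..3::nat} = {1, 2, 3}" by auto
  then show ?thesis by (simp add: add.assoc)
qed

lemma sum_sparse_column:
  fixes w y :: "nat \<Rightarrow> real"
  assumes "2 \<le> m" "Q \<Longrightarrow> 1 \<le> p \<and> p \<le> m"
  shows "(\<Sum>\<rho>=1..m. ((if P \<and> (\<rho> = 1 \<or> \<rho> = 2) then w \<rho> else 0) + (if Q \<and> \<rho> = p then 1 else 0)) * y \<rho>)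
       = (if P then w 1 * y 1 + w 2 * y 2 else 0) + (if Q then y p else 0)"
proof -
  have "(\<Sum>\<rho>=1..m. ((if P \<and> (\<rho> = 1 \<or> \<rho> = 2) then w \<rho> else 0) + (if Q \<and> \<rho> = p then 1 else 0)) * y \<rho>)
      = (\<Sum>\<rho>=1..m. (if P \<and> \<rho> = 1 then w \<rho> * y \<rho> else 0) + (if P \<and> \<rho> = 2 then w \<rho> * y \<rho> else 0)
                    + (if Q \<and> \<rho> = p then y \<rho> else 0))"
    by (intro sum.cong) (auto simp: distrib_right)
  then show ?thesis
    using assms by (simp add: sum.distrib)
qed

lemma affine_combination_diff:
  fixes a b \<phi> :: "nat \<Rightarrow> real"
  assumes "a 1 + a 2 + a 3 = 1" "b 1 + b 2 + b 3 = 1"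
  shows "(\<Sum>l=1..3. a l * \<phi> l) - (\<Sum>l=1..3. b l * \<phi> l)
       = (a 2 - b 2) * (\<phi> 2 - \<phi> 1) + (a 3 - b 3) * (\<phi> 3 - \<phi> 1)"
proof -
  have a1: "a 1 = 1 - a 2 - a 3" and b1: "b 1 = 1 - b 2 - b 3"
    using assms by linarith+
  show ?thesis
    unfolding sum_atLeastAtMost_1_3 a1 b1 by (simp add: algebra_simps)
qed

section \<open>Kronecker products and difference matrices\<close>

lemma kron_block_entry:
  assumes "1 \<le> k" "1 \<le> k'" "1 \<le> \<rho>" "\<rho> \<le> r" "1 \<le> c" "c \<le> s"
  shows "kron r s A B ((k-1)*r + \<rho>) ((k'-1)*s + c) = A k k' * B \<rho> c"
proof -
  have block: "((q-1)*t + d - 1) div t = q - 1" "((q-1)*t + d - 1) mod t = d - 1"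
    if "1 \<le> d" "d \<le> t" for q d t :: nat
    using that by (cases d; simp add: mult.commute)+
  show ?thesis
    using assms block[of \<rho> r k] block[of c s k'] by (simp add: kron_def)
qed

lemma idm_row_sum:
  assumes "1 \<le> i" "i \<le> q"
  shows "(\<Sum>i'=1..q. idm i i' * w i') = w i"
proof -
  have "(\<Sum>i'=1..q. idm i i' * w i') = (\<Sum>i'=1..q. if i = i' then w i' else 0)"
    by (rule sum.cong) (auto simp: idm_def)
  then show ?thesis
    using assms by simp
qed

lemma diffm_row_sum:
  assumes "1 \<le> i" "i < q"
  shows "(\<Sum>i'=1..q. diffm i i' * w i') = w (i+1) - w i"
proof -
  have "(\<Sum>i'=1..q. diffm i i' * w i')
      = (\<Sum>i'=1..q. (if i' = i+1 then w i' else 0) - (if i' = i then w i' else 0))"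
    by (rule sum.cong) (auto simp: diffm_def)
  then show ?thesis
    using assms by (simp add: sum_subtractf)
qed

lemma diffm_per_row_sum:
  assumes "1 \<le> i" "i \<le> q"
  shows "(\<Sum>i'=1..q. diffm_per q i i' * w i') = w (sigma q i) - w i"
proof -
  have "(\<Sum>i'=1..q. diffm_per q i i' * w i')
      = (\<Sum>i'=1..q. (if i' = sigma q i then w i' else 0) - (if i' = i then w i' else 0))"
    using assms by (intro sum.cong) (auto simp: diffm_per_def sigma_def)
  then show ?thesis
    using assms by (simp add: sum_subtractf sigma_def)
qed

lemma tmat_vec_kron_idm:
  assumes "1 \<le> k" "k \<le> n" "1 \<le> c" "c \<le> s"
  shows "tmat_vec (n*r) (kron r s idm B) y ((k-1)*s + c) = (\<Sum>\<rho>=1..r. B \<rho> c * y ((k-1)*r + \<rho>))"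
proof -
  have "tmat_vec (n*r) (kron r s idm B) y ((k-1)*s + c)
      = (\<Sum>k'=1..n. idm k k' * (\<Sum>\<rho>=1..r. B \<rho> c * y ((k'-1)*r + \<rho>)))"
    unfolding tmat_vec_def sum_split_blocks sum_distrib_left
    by (intro sum.cong refl, subst kron_block_entry) (use assms in \<open>auto simp: idm_def\<close>)
  also have "\<dots> = (\<Sum>\<rho>=1..r. B \<rho> c * y ((k-1)*r + \<rho>))"
    by (rule idm_row_sum) (use assms in auto)
  finally show ?thesis .
qed

lemma mat_vec_kron:
  assumes "1 \<le> k" "1 \<le> c" "c \<le> r"
  shows "mat_vec (n*s) (kron r s A B) x ((k-1)*r + c)
       = (\<Sum>k'=1..n. A k k' * (\<Sum>c'=1..s. B c c' * x ((k'-1)*s + c')))"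
  unfolding mat_vec_def sum_split_blocks sum_distrib_left
  by (intro sum.cong refl, subst kron_block_entry) (use assms in auto)

lemma mat_vec_kron_idm:
  assumes "1 \<le> k" "k \<le> n" "1 \<le> c" "c \<le> r"
  shows "mat_vec (n*s) (kron r s idm B) x ((k-1)*r + c) = mat_vec s B (\<lambda>c'. x ((k-1)*s + c')) c"
proof -
  have "mat_vec (n*s) (kron r s idm B) x ((k-1)*r + c)
      = (\<Sum>k'=1..n. idm k k' * (\<Sum>c'=1..s. B c c' * x ((k'-1)*s + c')))"
    by (rule mat_vec_kron) (use assms in auto)
  also have "\<dots> = (\<Sum>c'=1..s. B c c' * x ((k-1)*s + c'))"
    by (rule idm_row_sum) (use assms in auto)
  finally show ?thesis
    unfolding mat_vec_def .
qed

lemma mat_vec_idm: "1 \<le> i \<Longrightarrow> i \<le> n \<Longrightarrow> mat_vec n idm x i = x i"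
  unfolding mat_vec_def by (rule idm_row_sum)

lemma sum_vstack:
  "(\<Sum>\<rho>=1..m+n. vstack m A B \<rho> c * y \<rho>) = (\<Sum>\<rho>=1..m. A \<rho> c * y \<rho>) + (\<Sum>a=1..n. B a c * y (a + m))"
proof -
  have "(\<Sum>\<rho>=1..m+n. vstack m A B \<rho> c * y \<rho>)
      = (\<Sum>\<rho>=1..m. vstack m A B \<rho> c * y \<rho>) + (\<Sum>\<rho>=m+1..m+n. vstack m A B \<rho> c * y \<rho>)"
    by (rule sum.ub_add_nat) simp
  also have "(\<Sum>\<rho>=m+1..m+n. vstack m A B \<rho> c * y \<rho>) = (\<Sum>a=1..n. vstack m A B (a + m) c * y (a + m))"
    using sum.shift_bounds_cl_nat_ivl[of _ 1 m n] by (simp add: add.commute)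
  finally show ?thesis
    by (simp add: vstack_def)
qed

lemma D100_apply:
  assumes "1 \<le> k" "k \<le> nt" "1 \<le> i" "i \<le> nr" "1 \<le> j" "j \<le> ns"
  shows "mat_vec (nt*(ns*nr)) (D100 nr ns) u ((k-1)*(ns*nr) + ((j-1)*nr + i))
       = u ((k-1)*(ns*nr) + ((j-1)*nr + sigma nr i)) - u ((k-1)*(ns*nr) + ((j-1)*nr + i))"
proof -
  have "(j-1)*nr + i \<le> ns*nr"
    using assms by (intro block_index_le)
  then have "mat_vec (nt*(ns*nr)) (D100 nr ns) u ((k-1)*(ns*nr) + ((j-1)*nr + i))
      = mat_vec (ns*nr) (kron nr nr idm (diffm_per nr)) (\<lambda>c. u ((k-1)*(ns*nr) + c)) ((j-1)*nr + i)"
    unfolding D100_def by (intro mat_vec_kron_idm) (use assms in auto)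
  also have "\<dots> = mat_vec nr (diffm_per nr) (\<lambda>i'. u ((k-1)*(ns*nr) + ((j-1)*nr + i'))) i"
    by (rule mat_vec_kron_idm) (use assms in auto)
  also have "\<dots> = u ((k-1)*(ns*nr) + ((j-1)*nr + sigma nr i)) - u ((k-1)*(ns*nr) + ((j-1)*nr + i))"
    unfolding mat_vec_def by (rule diffm_per_row_sum) (use assms in auto)
  finally show ?thesis .
qed

lemma D010_apply:
  assumes "1 \<le> k" "k \<le> nt" "1 \<le> i" "i \<le> nr" "1 \<le> j" "j \<le> ns - 1"
  shows "mat_vec (nt*(ns*nr)) (D010 nr ns) u ((k-1)*((ns-1)*nr) + ((j-1)*nr + i))
       = u ((k-1)*(ns*nr) + (j*nr + i)) - u ((k-1)*(ns*nr) + ((j-1)*nr + i))"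
proof -
  let ?w = "\<lambda>c. u ((k-1)*(ns*nr) + c)"
  have "(j-1)*nr + i \<le> (ns-1)*nr"
    using assms by (intro block_index_le)
  then have "mat_vec (nt*(ns*nr)) (D010 nr ns) u ((k-1)*((ns-1)*nr) + ((j-1)*nr + i))
      = mat_vec (ns*nr) (kron nr nr diffm idm) ?w ((j-1)*nr + i)"
    unfolding D010_def by (intro mat_vec_kron_idm) (use assms in auto)
  also have "\<dots> = (\<Sum>j'=1..ns. diffm j j' * (\<Sum>i'=1..nr. idm i i' * ?w ((j'-1)*nr + i')))"
    by (rule mat_vec_kron) (use assms in auto)
  also have "\<dots> = (\<Sum>j'=1..ns. diffm j j' * ?w ((j'-1)*nr + i))"
    by (intro sum.cong refl, subst idm_row_sum) (use assms in auto)
  also have "\<dots> = ?w ((j+1-1)*nr + i) - ?w ((j-1)*nr + i)"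
    by (rule diffm_row_sum[where w = "\<lambda>j'. ?w ((j'-1)*nr + i)"]) (use assms in auto)
  finally show ?thesis
    by simp
qed

lemma D001_apply:
  assumes "1 \<le> k" "k \<le> nt" "1 \<le> c" "c \<le> ns*nr"
  shows "mat_vec (nt*(ns*nr)) (D001 nr ns nt) u ((k-1)*(ns*nr) + c)
       = u ((sigma nt k - 1)*(ns*nr) + c) - u ((k-1)*(ns*nr) + c)"
proof -
  obtain j i where ji: "1 \<le> j" "j \<le> ns" "1 \<le> i" "i \<le> nr" and c: "c = (j-1)*nr + i"
    using obtain_block_index[of c ns nr] assms by auto
  have identity: "mat_vec (ns*nr) (kron nr nr idm idm) w c = w c" for w
  proof -
    have "mat_vec (ns*nr) (kron nr nr idm idm) w c = mat_vec nr idm (\<lambda>i'. w ((j-1)*nr + i')) i"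
      unfolding c by (rule mat_vec_kron_idm) (use ji in auto)
    also have "\<dots> = w c"
      unfolding c by (rule mat_vec_idm) (use ji in auto)
    finally show ?thesis .
  qed
  have "mat_vec (nt*(ns*nr)) (D001 nr ns nt) u ((k-1)*(ns*nr) + c)
      = (\<Sum>k'=1..nt. diffm_per nt k k' * mat_vec (ns*nr) (kron nr nr idm idm) (\<lambda>c'. u ((k'-1)*(ns*nr) + c')) c)"
    unfolding D001_def mat_vec_def[of "ns*nr"] by (rule mat_vec_kron) (use assms in auto)
  also have "\<dots> = (\<Sum>k'=1..nt. diffm_per nt k k' * u ((k'-1)*(ns*nr) + c))"
    by (simp only: identity)
  also have "\<dots> = u ((sigma nt k - 1)*(ns*nr) + c) - u ((k-1)*(ns*nr) + c)"
    by (rule diffm_per_row_sum[where w = "\<lambda>k'. u ((k'-1)*(ns*nr) + c)"]) (use assms in auto)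
  finally show ?thesis .
qed

section \<open>The matrices E\<close>

lemma Ebar1_sum: "Ebar1 1 i + Ebar1 2 i + Ebar1 3 i = 1"
  by (simp add: Ebar1_def)

lemma Ebar2_sum: "Ebar2 nr 1 i + Ebar2 nr 2 i + Ebar2 nr 3 i = 1"
  by (simp add: Ebar2_def Let_def)

lemma Ebar2_Suc: "i \<le> nr \<Longrightarrow> Ebar2 nr l (i + 1) = Ebar2 nr l (sigma nr i)"
  by (auto simp: Ebar2_def sigma_def)

lemma E0_column_sum:
  assumes "1 \<le> i" "i \<le> nr" "1 \<le> j" "j \<le> ns"
  shows "(\<Sum>a=1..bn0 nr ns. E0 nr a ((j-1)*nr + i) * \<phi> a)
       = (if j = 1 then (\<Sum>l=1..3. Ebar1 l i * \<phi> l)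
          else if j = 2 then (\<Sum>l=1..3. Ebar2 nr l i * \<phi> l)
          else \<phi> (3 + i + (j-3)*nr))"
proof -
  let ?c = "(j-1)*nr + i"
  have split: "(\<Sum>a=1..bn0 nr ns. E0 nr a ?c * \<phi> a)
      = (\<Sum>a=1..3. E0 nr a ?c * \<phi> a) + (\<Sum>a=4..3 + nr*(ns-2). E0 nr a ?c * \<phi> a)"
    unfolding bn0_def using sum.ub_add_nat[of 1 3 _ "nr*(ns-2)"] by (simp add: add.commute)
  show ?thesis
  proof (cases "j \<le> 2")
    case True
    then have "(j-1)*nr \<le> 1*nr" by (intro mult_le_mono1) simp
    then have c: "?c \<le> 2*nr" using assms by linarith
    have "(\<Sum>a=4..3 + nr*(ns-2). E0 nr a ?c * \<phi> a) = 0"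
      using c by (intro sum.neutral) (auto simp: E0_def)
    moreover have "(\<Sum>a=1..3. E0 nr a ?c * \<phi> a) = (\<Sum>a=1..3. Ebar nr a ?c * \<phi> a)"
      using c by (intro sum.cong) (auto simp: E0_def)
    moreover have "j = 1 \<or> j = 2" using True assms by linarith
    ultimately show ?thesis
      using split assms by (auto simp: Ebar_def)
  next
    case False
    then have "2*nr \<le> (j-1)*nr" by (intro mult_le_mono1) simp
    then have c: "2*nr < ?c" using assms by linarith
    have "i + (j-3)*nr \<le> (ns-2)*nr"
      using assms False by (intro mixed_radix_le) auto
    then have mem: "3 + i + (j-3)*nr \<in> {4..3 + nr*(ns-2)}"
      using assms by (simp add: mult.commute)
    have "?c - 2*nr = i + (j-3)*nr"
      using False by (simp add: diff_mult_distrib)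
    then have "(\<Sum>a=4..3 + nr*(ns-2). E0 nr a ?c * \<phi> a)
        = (\<Sum>a=4..3 + nr*(ns-2). if a = 3 + i + (j-3)*nr then \<phi> a else 0)"
      using c by (intro sum.cong) (auto simp: E0_def)
    moreover have "(\<Sum>a=1..3. E0 nr a ?c * \<phi> a) = 0"
      using c by (intro sum.neutral) (auto simp: E0_def)
    ultimately show ?thesis
      using split mem False by simp
  qed
qed

lemma ring_node_le_bn0:
  assumes "i \<le> nr" "3 \<le> j" "j \<le> ns"
  shows "3 + i + (j-3)*nr \<le> bn0 nr ns"
proof -
  have "i + (j-3)*nr \<le> (ns-2)*nr"
    using assms by (intro mixed_radix_le) auto
  then show ?thesis
    by (simp add: bn0_def mult.commute)
qed

lemma E000_transpose_apply:
  assumes "1 \<le> k" "k \<le> nt" "1 \<le> c" "c \<le> ns*nr"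
  shows "tmat_vec (n0 nr ns nt) (E000 nr ns) f ((k-1)*(ns*nr) + c)
       = (\<Sum>a=1..bn0 nr ns. E0 nr a c * f ((k-1)*bn0 nr ns + a))"
  unfolding n0_def E000_def mult.commute[of ns nr]
  by (rule tmat_vec_kron_idm) (use assms in \<open>auto simp: mult.commute\<close>)

lemma E000_transpose_node:
  assumes "1 \<le> k" "k \<le> nt" "1 \<le> i" "i \<le> nr" "1 \<le> j" "j \<le> ns"
  shows "tmat_vec (n0 nr ns nt) (E000 nr ns) f ((k-1)*(ns*nr) + ((j-1)*nr + i))
       = (if j = 1 then (\<Sum>l=1..3. Ebar1 l i * f ((k-1)*bn0 nr ns + l))
          else if j = 2 then (\<Sum>l=1..3. Ebar2 nr l i * f ((k-1)*bn0 nr ns + l))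
          else f ((k-1)*bn0 nr ns + (3 + i + (j-3)*nr)))"
proof -
  have "(j-1)*nr + i \<le> ns*nr"
    using assms by (intro block_index_le)
  then have "tmat_vec (n0 nr ns nt) (E000 nr ns) f ((k-1)*(ns*nr) + ((j-1)*nr + i))
      = (\<Sum>a=1..bn0 nr ns. E0 nr a ((j-1)*nr + i) * f ((k-1)*bn0 nr ns + a))"
    by (intro E000_transpose_apply) (use assms in auto)
  also have "\<dots> = (if j = 1 then (\<Sum>l=1..3. Ebar1 l i * f ((k-1)*bn0 nr ns + l))
          else if j = 2 then (\<Sum>l=1..3. Ebar2 nr l i * f ((k-1)*bn0 nr ns + l))
          else f ((k-1)*bn0 nr ns + (3 + i + (j-3)*nr)))"
    by (rule E0_column_sum) (use assms in auto)
  finally show ?thesis .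
qed

lemma E10_column:
  assumes "1 \<le> i" "i \<le> nr" "1 \<le> j" "j \<le> ns"
  shows "E10 nr ns \<rho> ((j-1)*nr + i)
       = (if j = 2 \<and> (\<rho> = 1 \<or> \<rho> = 2) then Ebar2 nr (\<rho>+1) (i+1) - Ebar2 nr (\<rho>+1) i else 0)
       + (if 3 \<le> j \<and> \<rho> = 2 + i + (2*j - 5)*nr then 1 else 0)"
proof -
  have "nr < (j-1)*nr + i \<and> (j-1)*nr + i \<le> 2*nr \<longleftrightarrow> j = 2"
    using assms mixed_radix_le_iff[of i nr "j-1" 1] mixed_radix_le_iff[of i nr "j-1" 2] by auto
  moreover have "(\<Sum>j'=3..ns. \<Sum>i'=1..nr. if \<rho> = 2 + i' + (2*j' - 5)*nr \<and> (j-1)*nr + i = i' + (j'-1)*nr then 1 else 0)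
      = (\<Sum>j'=3..ns. \<Sum>i'=1..nr. if j' = j \<and> i' = i then (if \<rho> = 2 + i + (2*j - 5)*nr then 1 else 0) else 0 :: real)"
    using assms mixed_radix_eq_iff[of i nr _ "j-1"] by (intro sum.cong refl) (auto simp: add.commute)
  ultimately show ?thesis
    using assms by (auto simp: E10_def sum_delta2)
qed

lemma E01_column:
  assumes "1 \<le> i" "i \<le> nr" "1 \<le> j" "j \<le> ns - 1"
  shows "E01 nr ns \<rho> ((j-1)*nr + i)
       = (if j = 1 \<and> (\<rho> = 1 \<or> \<rho> = 2) then Ebar2 nr (\<rho>+1) i - Ebar1 (\<rho>+1) i else 0)
       + (if 2 \<le> j \<and> \<rho> = 2 + i + (2*j - 4)*nr then 1 else 0)"
proof -
  have "(j-1)*nr + i \<le> nr \<longleftrightarrow> j = 1"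
    using assms mixed_radix_le_iff[of i nr "j-1" 1] by auto
  moreover have "(\<Sum>j'=2..ns-1. \<Sum>i'=1..nr. if \<rho> = 2 + i' + (2*j' - 4)*nr \<and> (j-1)*nr + i = i' + (j'-1)*nr then 1 else 0)
      = (\<Sum>j'=2..ns-1. \<Sum>i'=1..nr. if j' = j \<and> i' = i then (if \<rho> = 2 + i + (2*j - 4)*nr then 1 else 0) else 0 :: real)"
    using assms mixed_radix_eq_iff[of i nr _ "j-1"] by (intro sum.cong refl) (auto simp: add.commute)
  ultimately show ?thesis
    using assms by (simp add: E01_def sum_delta2)
qed

section \<open>The diagonal blocks of D^(0)\<close>

text \<open>The values f_{m b0 + x} of slab m (time level m + 1), read with the periodic convention
  f_{nt b0 + x} = f_x of D^(0).\<close>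
definition slab :: "nat \<Rightarrow> nat \<Rightarrow> (nat \<Rightarrow> real) \<Rightarrow> nat \<Rightarrow> nat \<Rightarrow> real" where
  "slab nt b0 f m x = (if x + m*b0 \<le> nt*b0 then f (x + m*b0) else f (x + m*b0 - nt*b0))"

lemma slab_current:
  assumes "m < nt" "x \<le> b0"
  shows "slab nt b0 f m x = f (m*b0 + x)"
proof -
  have "m*b0 + b0 \<le> nt*b0"
    using assms mult_le_mono1[of "m+1" nt b0] by simp
  then show ?thesis
    using assms by (simp add: slab_def add.commute)
qed

lemma slab_next:
  assumes "1 \<le> k" "k \<le> nt" "1 \<le> x" "x \<le> b0"
  shows "slab nt b0 f k x = f ((sigma nt k - 1)*b0 + x)"
proof (cases "k < nt")
  case True
  then have "k*b0 + b0 \<le> nt*b0"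
    using mult_le_mono1[of "k+1" nt b0] by simp
  then show ?thesis
    using True assms by (simp add: slab_def sigma_def add.commute)
next
  case False
  then show ?thesis
    using assms by (simp add: slab_def sigma_def)
qed

text \<open>One diagonal block of D^(0), in terms of the nodal values g of the current slab and g' of the
  next one. The r-differences on the outermost ring, listed separately in D^(0), are the
  term j = ns of the third sum.\<close>
definition D0_block :: "nat \<Rightarrow> nat \<Rightarrow> (nat \<Rightarrow> real) \<Rightarrow> (nat \<Rightarrow> real) \<Rightarrow> nat \<Rightarrow> real" where
  "D0_block nr ns g g' \<rho> =
      (if \<rho> = 1 then g 2 - g 1 else 0) + (if \<rho> = 2 then g 3 - g 1 else 0)
    + (\<Sum>i=1..nr. if \<rho> = 2 + i then g (3 + i) - (\<Sum>l=1..3. Ebar2 nr l i * g l) else 0)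
    + (\<Sum>j=3..ns. \<Sum>i=1..nr. if \<rho> = 2 + i + (2*j - 5)*nr
         then g (3 + sigma nr i + (j-3)*nr) - g (3 + i + (j-3)*nr) else 0)
    + (\<Sum>j=3..ns-1. \<Sum>i=1..nr. if \<rho> = 2 + i + (2*j - 4)*nr
         then g (3 + i + (j-2)*nr) - g (3 + i + (j-3)*nr) else 0)
    + (\<Sum>a=1..bn0 nr ns. if \<rho> = a + bn1 nr ns then g' a - g a else 0)"

abbreviation D0_slab :: "nat \<Rightarrow> nat \<Rightarrow> nat \<Rightarrow> (nat \<Rightarrow> real) \<Rightarrow> nat \<Rightarrow> nat \<Rightarrow> real" where
  "D0_slab nr ns nt f k \<equiv> D0_block nr ns (slab nt (bn0 nr ns) f (k-1)) (slab nt (bn0 nr ns) f k)"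

lemma D0_eq_sum_blocks:
  assumes "ns \<ge> 3"
  shows "D0 nr ns nt f r = (\<Sum>k=1..nt. if (k-1)*(bn0 nr ns + bn1 nr ns) < r
           then D0_slab nr ns nt f k (r - (k-1)*(bn0 nr ns + bn1 nr ns))
           else 0)"
  unfolding D0_def Let_def
  apply (rule sum.cong[OF refl])
  subgoal premises k_mem for k
  proof -
    let ?b = "(k-1)*(bn0 nr ns + bn1 nr ns)"
    have t_row: "r = a + k*bn1 nr ns + (k-1)*bn0 nr ns \<longleftrightarrow> r = a + bn1 nr ns + ?b" for a
      using k_mem by (cases k) (auto simp: algebra_simps)
    have last_ring: "(\<Sum>j=3..ns. h j) = (\<Sum>j=3..ns-1. h j) + h ns" for h :: "nat \<Rightarrow> real"
      using assms sum.cl_ivl_Suc[of h 3 "ns-1"] by simp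
    show ?thesis
    proof (cases "?b < r")
      case True
      then obtain \<rho> where r: "r = \<rho> + ?b"
        by (metis add.commute less_imp_add_positive)
      show ?thesis
        unfolding t_row D0_block_def slab_def last_ring
        using True by (simp add: r sum.distrib ac_simps)
    next
      case False
      then show ?thesis
        unfolding t_row by simp
    qed
  qed
  done

lemma bn1_eq: "bn1 nr ns = 2 + (2*ns - 4)*nr"
  unfolding bn1_def by (simp add: diff_mult_distrib algebra_simps)

lemma grid_row_le_bn1:
  assumes "i \<le> nr" "q < 2*ns - 4"
  shows "2 + i + q*nr \<le> bn1 nr ns"
  using mixed_radix_le[OF assms] by (simp add: bn1_eq)

lemma D0_block_off_grid:
  assumes "ns \<ge> 3" "\<rho> \<le> 2 \<or> bn1 nr ns < \<rho>"
  shows "D0_block nr ns g g' \<rho> = (if \<rho> = 1 then g 2 - g 1 else 0) + (if \<rho> = 2 then g 3 - g 1 else 0)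
           + (\<Sum>a=1..bn0 nr ns. if \<rho> = a + bn1 nr ns then g' a - g a else 0)"
proof -
  have off: "\<rho> \<noteq> 2 + i + q*nr" if "1 \<le> i" "i \<le> nr" "q < 2*ns - 4" for i q
    using assms grid_row_le_bn1[OF that(2,3)] that(1) by auto
  have off_r: "\<rho> \<noteq> 2 + i + (2*j - 5)*nr" if "1 \<le> i" "i \<le> nr" "3 \<le> j" "j \<le> ns" for i j
    using that off[of i "2*j - 5"] by auto
  have off_s: "\<rho> \<noteq> 2 + i + (2*j - 4)*nr" if "1 \<le> i" "i \<le> nr" "3 \<le> j" "j \<le> ns - 1" for i j
    using that off[of i "2*j - 4"] by auto
  have "(\<Sum>i=1..nr. if \<rho> = 2 + i then g (3 + i) - (\<Sum>l=1..3. Ebar2 nr l i * g l) else 0) = 0"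
    using off[of _ 0] assms by (intro sum.neutral) auto
  moreover have "(\<Sum>j=3..ns. \<Sum>i=1..nr. if \<rho> = 2 + i + (2*j - 5)*nr
      then g (3 + sigma nr i + (j-3)*nr) - g (3 + i + (j-3)*nr) else 0) = 0"
    using off_r by (intro sum.neutral ballI) auto
  moreover have "(\<Sum>j=3..ns-1. \<Sum>i=1..nr. if \<rho> = 2 + i + (2*j - 4)*nr
      then g (3 + i + (j-2)*nr) - g (3 + i + (j-3)*nr) else 0) = 0"
    using off_s by (intro sum.neutral ballI) auto
  ultimately show ?thesis
    unfolding D0_block_def by simp
qed

lemma D0_block_1: "ns \<ge> 3 \<Longrightarrow> D0_block nr ns g g' 1 = g 2 - g 1"
  and D0_block_2: "ns \<ge> 3 \<Longrightarrow> D0_block nr ns g g' 2 = g 3 - g 1"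
  by (simp_all add: D0_block_off_grid bn1_def)

lemma D0_block_t_row:
  assumes "ns \<ge> 3" "1 \<le> a" "a \<le> bn0 nr ns"
  shows "D0_block nr ns g g' (a + bn1 nr ns) = g' a - g a"
  using assms by (simp add: D0_block_off_grid bn1_def sum_if_unique)

lemma D0_block_beyond:
  assumes "ns \<ge> 3" "bn0 nr ns + bn1 nr ns < \<rho>"
  shows "D0_block nr ns g g' \<rho> = 0"
  using assms by (simp add: D0_block_off_grid bn1_def sum.neutral)

text \<open>Rows 2 + i + q nr with q = 0, q = 2j - 5 and q = 2j - 4 are the s-differences out of the
  interpolated ring j = 2, the r-differences on ring j and the s-differences from ring j to
  ring j + 1, respectively.\<close>
lemma D0_block_grid_row:
  assumes "ns \<ge> 3" "1 \<le> i" "i \<le> nr" "q < 2*ns - 4"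
  shows "D0_block nr ns g g' (2 + i + q*nr) =
      (if q = 0 then g (3 + i) - (\<Sum>l=1..3. Ebar2 nr l i * g l) else 0)
    + (\<Sum>j=3..ns. if q = 2*j - 5 then g (3 + sigma nr i + (j-3)*nr) - g (3 + i + (j-3)*nr) else 0)
    + (\<Sum>j=3..ns-1. if q = 2*j - 4 then g (3 + i + (j-2)*nr) - g (3 + i + (j-3)*nr) else 0)"
proof -
  have grid: "(\<Sum>i'=1..nr. if 2 + i + q*nr = 2 + i' + q'*nr then v i' else 0) = (if q = q' then v i else 0)"
    for q' and v :: "nat \<Rightarrow> real"
  proof (cases "q = q'")
    case True
    then show ?thesis
      using assms mixed_radix_eq_iff[of i nr] by (simp add: sum_if_unique)
  next
    case False
    then show ?thesis
      using assms mixed_radix_eq_iff[of i nr] by (auto intro!: sum.neutral)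
  qed
  have spoke: "(\<Sum>i'=1..nr. if 2 + i + q*nr = 2 + i' then v i' else 0) = (if q = 0 then v i else 0)"
    for v :: "nat \<Rightarrow> real"
    using grid[of 0 v] by simp
  have grid2: "(\<Sum>j\<in>J. \<Sum>i'=1..nr. if 2 + i + q*nr = 2 + i' + h j * nr then v j i' else 0)
      = (\<Sum>j\<in>J. if q = h j then v j i else 0)" for J h and v :: "nat \<Rightarrow> nat \<Rightarrow> real"
    by (intro sum.cong refl grid)
  have "2 + i + q*nr \<le> bn1 nr ns"
    using assms by (intro grid_row_le_bn1)
  then show ?thesis
    unfolding D0_block_def spoke grid2 using assms by simp
qed

lemma D0_block_spoke:
  assumes "ns \<ge> 3" "1 \<le> i" "i \<le> nr"
  shows "D0_block nr ns g g' (2 + i) = g (3 + i) - (\<Sum>l=1..3. Ebar2 nr l i * g l)"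
  using D0_block_grid_row[of ns i nr 0 g g'] assms by (auto intro!: sum.neutral)

lemma D0_block_r_row:
  assumes "ns \<ge> 3" "1 \<le> i" "i \<le> nr" "3 \<le> j" "j \<le> ns"
  shows "D0_block nr ns g g' (2 + i + (2*j - 5)*nr) = g (3 + sigma nr i + (j-3)*nr) - g (3 + i + (j-3)*nr)"
proof -
  have "(\<Sum>j'=3..ns. if 2*j - 5 = 2*j' - 5 then g (3 + sigma nr i + (j'-3)*nr) - g (3 + i + (j'-3)*nr) else 0)
      = g (3 + sigma nr i + (j-3)*nr) - g (3 + i + (j-3)*nr)"
    using assms by (intro sum_if_unique) auto
  moreover have "(\<Sum>j'=3..ns-1. if 2*j - 5 = 2*j' - 4 then g (3 + i + (j'-2)*nr) - g (3 + i + (j'-3)*nr) else 0) = 0"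
    using assms by (intro sum.neutral ballI) presburger
  ultimately show ?thesis
    using D0_block_grid_row[of ns i nr "2*j - 5" g g'] assms by simp
qed

lemma D0_block_s_row:
  assumes "ns \<ge> 3" "1 \<le> i" "i \<le> nr" "3 \<le> j" "j \<le> ns - 1"
  shows "D0_block nr ns g g' (2 + i + (2*j - 4)*nr) = g (3 + i + (j-2)*nr) - g (3 + i + (j-3)*nr)"
proof -
  have "(\<Sum>j'=3..ns-1. if 2*j - 4 = 2*j' - 4 then g (3 + i + (j'-2)*nr) - g (3 + i + (j'-3)*nr) else 0)
      = g (3 + i + (j-2)*nr) - g (3 + i + (j-3)*nr)"
    using assms by (intro sum_if_unique) auto
  moreover have "(\<Sum>j'=3..ns. if 2*j - 4 = 2*j' - 5 then g (3 + sigma nr i + (j'-3)*nr) - g (3 + i + (j'-3)*nr) else 0) = 0"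
    using assms by (intro sum.neutral ballI) presburger
  ultimately show ?thesis
    using D0_block_grid_row[of ns i nr "2*j - 4" g g'] assms by simp
qed

lemma D0_block_row:
  assumes "ns \<ge> 3" "1 \<le> k" "k \<le> nt" "1 \<le> \<rho>" "\<rho> \<le> bn0 nr ns + bn1 nr ns"
  shows "D0 nr ns nt f ((k-1)*(bn0 nr ns + bn1 nr ns) + \<rho>) = D0_slab nr ns nt f k \<rho>"
proof -
  let ?M = "bn0 nr ns + bn1 nr ns"
  let ?blk = "D0_slab nr ns nt f"
  have "D0 nr ns nt f ((k-1)*?M + \<rho>) = (\<Sum>k'=1..nt. if k' = k then ?blk k \<rho> else 0)"
    unfolding D0_eq_sum_blocks[OF assms(1)]
  proof (intro sum.cong refl)
    fix k' assume "k' \<in> {1..nt}"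
    consider "k' < k" | "k' = k" | "k < k'" by linarith
    then show "(if (k'-1)*?M < (k-1)*?M + \<rho> then ?blk k' ((k-1)*?M + \<rho> - (k'-1)*?M) else 0)
             = (if k' = k then ?blk k \<rho> else 0)"
    proof cases
      case 1
      have "k'*?M \<le> (k-1)*?M"
        using 1 by (intro mult_le_mono1) simp
      moreover have "(k'-1)*?M + ?M = k'*?M"
        using \<open>k' \<in> {1..nt}\<close> by (cases k') auto
      ultimately have "(k'-1)*?M + ?M \<le> (k-1)*?M"
        by simp
      then show ?thesis
        using 1 assms by (simp add: D0_block_beyond)
    next
      case 3
      have "k*?M \<le> (k'-1)*?M"
        using 3 by (intro mult_le_mono1) simp
      moreover have "(k-1)*?M + ?M = k*?M"
        using assms by (cases k) auto
      ultimately have "(k-1)*?M + \<rho> \<le> (k'-1)*?M"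
        using assms by linarith
      then show ?thesis
        using 3 by simp
    qed (use assms in simp)
  qed
  then show ?thesis
    using assms by simp
qed

lemma tmat_vec_kron_D0:
  assumes "ns \<ge> 3" "1 \<le> k" "k \<le> nt" "1 \<le> c" "c \<le> s"
  shows "tmat_vec (n1 nr ns nt) (kron (bn1 nr ns + bn0 nr ns) s idm B) (D0 nr ns nt f) ((k-1)*s + c)
       = (\<Sum>\<rho>=1..bn1 nr ns + bn0 nr ns. B \<rho> c * D0_slab nr ns nt f k \<rho>)"
proof -
  have n1: "n1 nr ns nt = nt * (bn1 nr ns + bn0 nr ns)"
    by (simp add: n1_def add.commute)
  have "tmat_vec (n1 nr ns nt) (kron (bn1 nr ns + bn0 nr ns) s idm B) (D0 nr ns nt f) ((k-1)*s + c)
      = (\<Sum>\<rho>=1..bn1 nr ns + bn0 nr ns. B \<rho> c * D0 nr ns nt f ((k-1)*(bn1 nr ns + bn0 nr ns) + \<rho>))"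
    unfolding n1 by (rule tmat_vec_kron_idm) (use assms in auto)
  also have "\<dots> = (\<Sum>\<rho>=1..bn1 nr ns + bn0 nr ns. B \<rho> c * D0_slab nr ns nt f k \<rho>)"
  proof (intro sum.cong refl)
    fix \<rho> assume "\<rho> \<in> {1..bn1 nr ns + bn0 nr ns}"
    then show "B \<rho> c * D0 nr ns nt f ((k-1)*(bn1 nr ns + bn0 nr ns) + \<rho>)
        = B \<rho> c * D0_slab nr ns nt f k \<rho>"
      using D0_block_row[of ns k nt \<rho> nr f] assms by (simp add: add.commute)
  qed
  finally show ?thesis .
qed

lemma tmat_vec_stack_D0:
  assumes "ns \<ge> 3" "1 \<le> k" "k \<le> nt" "1 \<le> c" "c \<le> s"
  shows "tmat_vec (n1 nr ns nt) (kron (bn1 nr ns + bn0 nr ns) s idm (vstack (bn1 nr ns) B zerom))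
           (D0 nr ns nt f) ((k-1)*s + c)
       = (\<Sum>\<rho>=1..bn1 nr ns. B \<rho> c * D0_slab nr ns nt f k \<rho>)"
  unfolding tmat_vec_kron_D0[OF assms] sum_vstack by (simp add: zerom_def)

lemma E100_transpose_D0:
  assumes "ns \<ge> 3" "1 \<le> k" "k \<le> nt" "1 \<le> i" "i \<le> nr" "1 \<le> j" "j \<le> ns"
  shows "tmat_vec (n1 nr ns nt) (E100 nr ns) (D0 nr ns nt f) ((k-1)*(ns*nr) + ((j-1)*nr + i))
       = (if j = 2 then (Ebar2 nr 2 (i+1) - Ebar2 nr 2 i) * D0_slab nr ns nt f k 1
                      + (Ebar2 nr 3 (i+1) - Ebar2 nr 3 i) * D0_slab nr ns nt f k 2 else 0)
       + (if 3 \<le> j then D0_slab nr ns nt f k (2 + i + (2*j - 5)*nr) else 0)"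
proof -
  have "(j-1)*nr + i \<le> ns*nr"
    using assms by (intro block_index_le)
  then have "tmat_vec (n1 nr ns nt) (E100 nr ns) (D0 nr ns nt f) ((k-1)*(ns*nr) + ((j-1)*nr + i))
      = (\<Sum>\<rho>=1..bn1 nr ns. E10 nr ns \<rho> ((j-1)*nr + i) * D0_slab nr ns nt f k \<rho>)"
    unfolding E100_def mult.commute[of ns nr]
    by (intro tmat_vec_stack_D0) (use assms in \<open>auto simp: mult.commute\<close>)
  also have "\<dots> = (if j = 2 then (Ebar2 nr (1+1) (i+1) - Ebar2 nr (1+1) i) * D0_slab nr ns nt f k 1
                      + (Ebar2 nr (2+1) (i+1) - Ebar2 nr (2+1) i) * D0_slab nr ns nt f k 2 else 0)
       + (if 3 \<le> j then D0_slab nr ns nt f k (2 + i + (2*j - 5)*nr) else 0)"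
    unfolding E10_column[OF assms(4-7)]
    by (rule sum_sparse_column) (use assms grid_row_le_bn1[of i nr "2*j - 5" ns] in \<open>auto simp: bn1_def\<close>)
  finally show ?thesis
    by (simp add: numeral_2_eq_2 numeral_3_eq_3)
qed

lemma E010_transpose_D0:
  assumes "ns \<ge> 3" "1 \<le> k" "k \<le> nt" "1 \<le> i" "i \<le> nr" "1 \<le> j" "j \<le> ns - 1"
  shows "tmat_vec (n1 nr ns nt) (E010 nr ns) (D0 nr ns nt f) ((k-1)*((ns-1)*nr) + ((j-1)*nr + i))
       = (if j = 1 then (Ebar2 nr 2 i - Ebar1 2 i) * D0_slab nr ns nt f k 1
                      + (Ebar2 nr 3 i - Ebar1 3 i) * D0_slab nr ns nt f k 2 else 0)
       + (if 2 \<le> j then D0_slab nr ns nt f k (2 + i + (2*j - 4)*nr) else 0)"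
proof -
  have "(j-1)*nr + i \<le> (ns-1)*nr"
    using assms by (intro block_index_le)
  then have "tmat_vec (n1 nr ns nt) (E010 nr ns) (D0 nr ns nt f) ((k-1)*((ns-1)*nr) + ((j-1)*nr + i))
      = (\<Sum>\<rho>=1..bn1 nr ns. E01 nr ns \<rho> ((j-1)*nr + i) * D0_slab nr ns nt f k \<rho>)"
    unfolding E010_def mult.commute[of "ns-1" nr]
    by (intro tmat_vec_stack_D0) (use assms in \<open>auto simp: mult.commute\<close>)
  also have "\<dots> = (if j = 1 then (Ebar2 nr (1+1) i - Ebar1 (1+1) i) * D0_slab nr ns nt f k 1
                      + (Ebar2 nr (2+1) i - Ebar1 (2+1) i) * D0_slab nr ns nt f k 2 else 0)
       + (if 2 \<le> j then D0_slab nr ns nt f k (2 + i + (2*j - 4)*nr) else 0)"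
    unfolding E01_column[OF assms(4-7)]
    by (rule sum_sparse_column) (use assms grid_row_le_bn1[of i nr "2*j - 4" ns] in \<open>auto simp: bn1_def\<close>)
  finally show ?thesis
    by (simp add: numeral_2_eq_2 numeral_3_eq_3)
qed

lemma D100_E000_commute:
  assumes "ns \<ge> 3" "1 \<le> k" "k \<le> nt" "1 \<le> i" "i \<le> nr" "1 \<le> j" "j \<le> ns"
  shows "mat_vec (nt*(ns*nr)) (D100 nr ns) (tmat_vec (n0 nr ns nt) (E000 nr ns) f) ((k-1)*(ns*nr) + ((j-1)*nr + i))
       = tmat_vec (n1 nr ns nt) (E100 nr ns) (D0 nr ns nt f) ((k-1)*(ns*nr) + ((j-1)*nr + i))"
proof -
  define \<phi> where "\<phi> a = f ((k-1)*bn0 nr ns + a)" for a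
  let ?u = "tmat_vec (n0 nr ns nt) (E000 nr ns) f"
  have u: "?u ((k-1)*(ns*nr) + ((j-1)*nr + i'))
      = (if j = 1 then (\<Sum>l=1..3. Ebar1 l i' * \<phi> l)
         else if j = 2 then (\<Sum>l=1..3. Ebar2 nr l i' * \<phi> l)
         else \<phi> (3 + i' + (j-3)*nr))" if "1 \<le> i'" "i' \<le> nr" for i'
    unfolding \<phi>_def by (rule E000_transpose_node) (use assms that in auto)
  have g: "slab nt (bn0 nr ns) f (k-1) x = \<phi> x" if "x \<le> bn0 nr ns" for x
    unfolding \<phi>_def using assms that by (simp add: slab_current)
  have b0: "3 \<le> bn0 nr ns"
    by (simp add: bn0_def)
  have \<sigma>: "1 \<le> sigma nr i" "sigma nr i \<le> nr"
    using assms sigma_range[of i nr] by auto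
  have "mat_vec (nt*(ns*nr)) (D100 nr ns) ?u ((k-1)*(ns*nr) + ((j-1)*nr + i))
      = ?u ((k-1)*(ns*nr) + ((j-1)*nr + sigma nr i)) - ?u ((k-1)*(ns*nr) + ((j-1)*nr + i))"
    by (rule D100_apply) (use assms in auto)
  also have "\<dots> = (if j = 2 then (Ebar2 nr 2 (i+1) - Ebar2 nr 2 i) * D0_slab nr ns nt f k 1
                     + (Ebar2 nr 3 (i+1) - Ebar2 nr 3 i) * D0_slab nr ns nt f k 2 else 0)
      + (if 3 \<le> j then D0_slab nr ns nt f k (2 + i + (2*j - 5)*nr) else 0)"
  proof -
    consider "j = 1" | "j = 2" | "3 \<le> j"
      using assms by linarith
    then show ?thesis
    proof cases
      case 1
      then show ?thesis
        using u[OF \<sigma>] u[of i] assms by (simp add: Ebar1_def)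
    next
      case 2
      have "(\<Sum>l=1..3. Ebar2 nr l (sigma nr i) * \<phi> l) - (\<Sum>l=1..3. Ebar2 nr l i * \<phi> l)
          = (Ebar2 nr 2 (sigma nr i) - Ebar2 nr 2 i) * (\<phi> 2 - \<phi> 1)
          + (Ebar2 nr 3 (sigma nr i) - Ebar2 nr 3 i) * (\<phi> 3 - \<phi> 1)"
        by (rule affine_combination_diff) (rule Ebar2_sum)+
      moreover have "D0_slab nr ns nt f k 1 = \<phi> 2 - \<phi> 1" "D0_slab nr ns nt f k 2 = \<phi> 3 - \<phi> 1"
        using D0_block_1[OF assms(1)] D0_block_2[OF assms(1)] g b0 by simp_all
      moreover have "Ebar2 nr l (i+1) = Ebar2 nr l (sigma nr i)" for l
        using assms(5) by (rule Ebar2_Suc)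
      ultimately show ?thesis
        using 2 u[OF \<sigma>] u[of i] assms by simp
    next
      case 3
      have "D0_slab nr ns nt f k (2 + i + (2*j - 5)*nr) = \<phi> (3 + sigma nr i + (j-3)*nr) - \<phi> (3 + i + (j-3)*nr)"
        using D0_block_r_row[OF assms(1,4,5) 3 assms(7)] g ring_node_le_bn0[OF _ 3 assms(7)] \<sigma> assms
        by simp
      then show ?thesis
        using 3 u[OF \<sigma>] u[of i] assms by simp
    qed
  qed
  also have "\<dots> = tmat_vec (n1 nr ns nt) (E100 nr ns) (D0 nr ns nt f) ((k-1)*(ns*nr) + ((j-1)*nr + i))"
    by (rule E100_transpose_D0[symmetric]) (rule assms)+
  finally show ?thesis .
qed

lemma D010_E000_commute:
  assumes "ns \<ge> 3" "1 \<le> k" "k \<le> nt" "1 \<le> i" "i \<le> nr" "1 \<le> j" "j \<le> ns - 1"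
  shows "mat_vec (nt*(ns*nr)) (D010 nr ns) (tmat_vec (n0 nr ns nt) (E000 nr ns) f) ((k-1)*((ns-1)*nr) + ((j-1)*nr + i))
       = tmat_vec (n1 nr ns nt) (E010 nr ns) (D0 nr ns nt f) ((k-1)*((ns-1)*nr) + ((j-1)*nr + i))"
proof -
  define \<phi> where "\<phi> a = f ((k-1)*bn0 nr ns + a)" for a
  let ?u = "tmat_vec (n0 nr ns nt) (E000 nr ns) f"
  have u: "?u ((k-1)*(ns*nr) + ((j'-1)*nr + i))
      = (if j' = 1 then (\<Sum>l=1..3. Ebar1 l i * \<phi> l)
         else if j' = 2 then (\<Sum>l=1..3. Ebar2 nr l i * \<phi> l)
         else \<phi> (3 + i + (j'-3)*nr))" if "1 \<le> j'" "j' \<le> ns" for j'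
    unfolding \<phi>_def by (rule E000_transpose_node) (use assms that in auto)
  have g: "slab nt (bn0 nr ns) f (k-1) x = \<phi> x" if "x \<le> bn0 nr ns" for x
    unfolding \<phi>_def using assms that by (simp add: slab_current)
  have b0: "3 \<le> bn0 nr ns"
    by (simp add: bn0_def)
  have "mat_vec (nt*(ns*nr)) (D010 nr ns) ?u ((k-1)*((ns-1)*nr) + ((j-1)*nr + i))
      = ?u ((k-1)*(ns*nr) + (j*nr + i)) - ?u ((k-1)*(ns*nr) + ((j-1)*nr + i))"
    by (rule D010_apply) (use assms in auto)
  also have "\<dots> = (if j = 1 then (Ebar2 nr 2 i - Ebar1 2 i) * D0_slab nr ns nt f k 1
                     + (Ebar2 nr 3 i - Ebar1 3 i) * D0_slab nr ns nt f k 2 else 0)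
      + (if 2 \<le> j then D0_slab nr ns nt f k (2 + i + (2*j - 4)*nr) else 0)"
  proof -
    consider "j = 1" | "j = 2" | "3 \<le> j"
      using assms by linarith
    then show ?thesis
    proof cases
      case 1
      have "(\<Sum>l=1..3. Ebar2 nr l i * \<phi> l) - (\<Sum>l=1..3. Ebar1 l i * \<phi> l)
          = (Ebar2 nr 2 i - Ebar1 2 i) * (\<phi> 2 - \<phi> 1) + (Ebar2 nr 3 i - Ebar1 3 i) * (\<phi> 3 - \<phi> 1)"
        by (rule affine_combination_diff) (rule Ebar2_sum, rule Ebar1_sum)
      moreover have "D0_slab nr ns nt f k 1 = \<phi> 2 - \<phi> 1" "D0_slab nr ns nt f k 2 = \<phi> 3 - \<phi> 1"
        using D0_block_1[OF assms(1)] D0_block_2[OF assms(1)] g b0 by simp_all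
      ultimately show ?thesis
        using 1 u[of 1] u[of 2] assms by simp
    next
      case 2
      have "D0_slab nr ns nt f k (2 + i) = \<phi> (3 + i) - (\<Sum>l=1..3. Ebar2 nr l i * \<phi> l)"
        using D0_block_spoke[OF assms(1,4,5)] g b0 ring_node_le_bn0[of i nr 3 ns] assms
        by (simp add: sum_atLeastAtMost_1_3)
      then show ?thesis
        using 2 u[of 2] u[of 3] assms by simp
    next
      case 3
      have "D0_slab nr ns nt f k (2 + i + (2*j - 4)*nr) = \<phi> (3 + i + (j-2)*nr) - \<phi> (3 + i + (j-3)*nr)"
        using D0_block_s_row[OF assms(1,4,5) 3 assms(7)] g ring_node_le_bn0[of i nr "j+1" ns]
          ring_node_le_bn0[of i nr j ns] 3 assms
        by simp
      then show ?thesis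
        using 3 u[of j] u[of "j+1"] assms by simp
    qed
  qed
  also have "\<dots> = tmat_vec (n1 nr ns nt) (E010 nr ns) (D0 nr ns nt f) ((k-1)*((ns-1)*nr) + ((j-1)*nr + i))"
    by (rule E010_transpose_D0[symmetric]) (rule assms)+
  finally show ?thesis .
qed

lemma D001_E000_commute:
  assumes "ns \<ge> 3" "1 \<le> k" "k \<le> nt" "1 \<le> c" "c \<le> ns*nr"
  shows "mat_vec (nt*(ns*nr)) (D001 nr ns nt) (tmat_vec (n0 nr ns nt) (E000 nr ns) f) ((k-1)*(ns*nr) + c)
       = tmat_vec (n1 nr ns nt) (E001 nr ns) (D0 nr ns nt f) ((k-1)*(ns*nr) + c)"
proof -
  let ?b0 = "bn0 nr ns"
  let ?u = "tmat_vec (n0 nr ns nt) (E000 nr ns) f"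
  let ?E0f = "\<lambda>k. \<Sum>a=1..?b0. E0 nr a c * f ((k-1)*?b0 + a)"
  have "mat_vec (nt*(ns*nr)) (D001 nr ns nt) ?u ((k-1)*(ns*nr) + c)
      = ?u ((sigma nt k - 1)*(ns*nr) + c) - ?u ((k-1)*(ns*nr) + c)"
    by (rule D001_apply) (use assms in auto)
  also have "\<dots> = ?E0f (sigma nt k) - ?E0f k"
    by (subst (1 2) E000_transpose_apply) (use assms sigma_range[of k nt] in auto)
  also have "\<dots> = (\<Sum>a=1..?b0. E0 nr a c * (slab nt ?b0 f k a - slab nt ?b0 f (k-1) a))"
    using assms by (simp add: slab_current slab_next right_diff_distrib sum_subtractf)
  also have "\<dots> = (\<Sum>\<rho>=1..bn1 nr ns + ?b0.
      vstack (bn1 nr ns) zerom (E0 nr) \<rho> c * D0_slab nr ns nt f k \<rho>)"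
    unfolding sum_vstack using assms by (simp add: zerom_def D0_block_t_row)
  also have "\<dots> = tmat_vec (n1 nr ns nt) (E001 nr ns) (D0 nr ns nt f) ((k-1)*(ns*nr) + c)"
    unfolding E001_def mult.commute[of ns nr]
    by (rule tmat_vec_kron_D0[symmetric]) (use assms in \<open>auto simp: mult.commute\<close>)
  finally show ?thesis .
qed

theorem proposition3p1:
  fixes nr ns nt :: nat and f :: "nat \<Rightarrow> real"
  assumes "nr \<ge> 2" and "ns \<ge> 3" and "nt \<ge> 2"
  shows "(\<forall>j\<in>{1..nt * ns * nr}.
            mat_vec (nt * ns * nr) (D100 nr ns) (tmat_vec (n0 nr ns nt) (E000 nr ns) f) j
          = tmat_vec (n1 nr ns nt) (E100 nr ns) (D0 nr ns nt f) j)
       \<and> (\<forall>j\<in>{1..nt * (ns - 1) * nr}.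
            mat_vec (nt * ns * nr) (D010 nr ns) (tmat_vec (n0 nr ns nt) (E000 nr ns) f) j
          = tmat_vec (n1 nr ns nt) (E010 nr ns) (D0 nr ns nt f) j)
       \<and> (\<forall>j\<in>{1..nt * ns * nr}.
            mat_vec (nt * ns * nr) (D001 nr ns nt) (tmat_vec (n0 nr ns nt) (E000 nr ns) f) j
          = tmat_vec (n1 nr ns nt) (E001 nr ns) (D0 nr ns nt f) j)"
  unfolding mult.assoc
proof (intro conjI ballI)
  fix J assume "J \<in> {1..nt * (ns * nr)}"
  then obtain k c where k: "1 \<le> k" "k \<le> nt" and c: "1 \<le> c" "c \<le> ns * nr"
    and J: "J = (k-1)*(ns*nr) + c"
    by (rule obtain_block_index)
  obtain j i where ji: "1 \<le> j" "j \<le> ns" "1 \<le> i" "i \<le> nr" and c_eq: "c = (j-1)*nr + i"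
    using obtain_block_index[of c ns nr] c by auto
  show "mat_vec (nt * (ns * nr)) (D100 nr ns) (tmat_vec (n0 nr ns nt) (E000 nr ns) f) J
      = tmat_vec (n1 nr ns nt) (E100 nr ns) (D0 nr ns nt f) J"
    unfolding J c_eq using assms k ji by (intro D100_E000_commute) auto
  show "mat_vec (nt * (ns * nr)) (D001 nr ns nt) (tmat_vec (n0 nr ns nt) (E000 nr ns) f) J
      = tmat_vec (n1 nr ns nt) (E001 nr ns) (D0 nr ns nt f) J"
    unfolding J using assms k c by (intro D001_E000_commute) auto
next
  fix J assume "J \<in> {1..nt * ((ns - 1) * nr)}"
  then obtain k c where k: "1 \<le> k" "k \<le> nt" and c: "1 \<le> c" "c \<le> (ns - 1) * nr"
    and J: "J = (k-1)*((ns-1)*nr) + c"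
    by (rule obtain_block_index)
  obtain j i where ji: "1 \<le> j" "j \<le> ns - 1" "1 \<le> i" "i \<le> nr" and c_eq: "c = (j-1)*nr + i"
    using obtain_block_index[of c "ns-1" nr] c by auto
  show "mat_vec (nt * (ns * nr)) (D010 nr ns) (tmat_vec (n0 nr ns nt) (E000 nr ns) f) J
      = tmat_vec (n1 nr ns nt) (E010 nr ns) (D0 nr ns nt f) J"
    unfolding J c_eq using assms k ji by (intro D010_E000_commute) auto
qed

end
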